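(* Let $f$ be a pdf supported on $[-\tfrac14,\tfrac14]$. Then $$2\big(\mathrm{Re}\,\hat f(1)\big)^2-1\le\mathrm{Re}\,\hat f(2)\le 2\,\mathrm{Re}\,\hat f(1)-1.$$
   Context: $\mathbb{T}=\mathbb{R}/\mathbb{Z}$; $\hat f(j)=\int_{\mathbb{T}} f(x)e^{-2\pi ijx}\,dx$. A pdf is a nonnegative function in $L^2(\mathbb{T})$ with integral 1; $[-\tfrac14,\tfrac14]$ is regarded as a subset of $\mathbb{T}$. *)

theory Defs
  imports "HOL-Analysis.Analysis"
begin

text \<open>Functions on the circle T = R/Z are represented as 1-periodic functions on R.
  Integrals over T are Lebesgue integrals over the fundamental domain [0,1].\<close>

definition circle_pdf :: "(real \<Rightarrow> real) \<Rightarrow> bool" where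
  "circle_pdf f \<longleftrightarrow>
     (\<forall>x. f (x + 1) = f x) \<and>
     f \<in> borel_measurable lborel \<and>
     set_integrable lborel {0..1} (\<lambda>x. (f x)\<^sup>2) \<and>
     (AE x in lborel. f x \<ge> 0) \<and>
     (LINT x : {0..1} | lborel. f x) = 1"

definition fourier_coeff :: "(real \<Rightarrow> real) \<Rightarrow> int \<Rightarrow> complex" where
  "fourier_coeff f j =
     (LINT x : {0..1} | lborel. complex_of_real (f x) * exp (- 2 * pi * \<i> * of_int j * of_real x))"

text \<open>f is supported on [-1/4,1/4] viewed in T: f vanishes (a.e.) at every point
  whose distance to the nearest integer exceeds 1/4.\<close>
definition supported_quarter :: "(real \<Rightarrow> real) \<Rightarrow> bool" where
  "supported_quarter f \<longleftrightarrow> (AE x in lborel. \<bar>x - real_of_int (round x)\<bar> > 1/4 \<longrightarrow> f x = 0)"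

end

theory Submission
  imports Defs
begin

text \<open>Write \<open>g\<close> for \<open>f\<close> restricted to the fundamental domain \<open>[0,1]\<close>, a probability density, and
  \<open>c x = cos (2 pi x)\<close>. Then \<open>Re (hat f 1)\<close> is the mean \<open>E c\<close> and, by the double-angle formula,
  \<open>Re (hat f 2) = 2 E (c\<^sup>2) - 1\<close>. The lower bound is \<open>(E c)\<^sup>2 \<le> E (c\<^sup>2)\<close>, i.e. nonnegativity of the
  variance. The upper bound is \<open>E (c\<^sup>2) \<le> E c\<close>, which holds because \<open>0 \<le> c \<le> 1\<close> on the support
  \<open>[-1/4,1/4]\<close>, so that \<open>c\<^sup>2 \<le> c\<close> there.\<close>

lemma integrable_mult_bounded:
  fixes g h :: "'a \<Rightarrow> real"
  assumes "integrable M g" "h \<in> borel_measurable M" "\<And>x. \<bar>h x\<bar> \<le> B"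
  shows "integrable M (\<lambda>x. g x * h x)"
proof (rule Bochner_Integration.integrable_bound)
  show "integrable M (\<lambda>x. B * g x)"
    using assms(1) by simp
  show "(\<lambda>x. g x * h x) \<in> borel_measurable M"
    using assms(1,2) by measurable
  have "\<bar>h x\<bar> \<le> \<bar>B\<bar>" for x
    using assms(3)[of x] by linarith
  then show "AE x in M. norm (g x * h x) \<le> norm (B * g x)"
    by (intro AE_I2) (simp add: abs_mult mult.commute[of "\<bar>B\<bar>"] mult_left_mono)
qed

lemma weighted_mean_square_le:
  fixes g h :: "'a \<Rightarrow> real"
  assumes g_int: "integrable M g" and g_nonneg: "AE x in M. 0 \<le> g x" and g_total: "integral\<^sup>L M g = 1"
    and gh_int: "integrable M (\<lambda>x. g x * h x)" and gh2_int: "integrable M (\<lambda>x. g x * (h x)\<^sup>2)"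
  shows "(\<integral>x. g x * h x \<partial>M)\<^sup>2 \<le> (\<integral>x. g x * (h x)\<^sup>2 \<partial>M)"
proof -
  define m where "m = (\<integral>x. g x * h x \<partial>M)"
  have "0 \<le> (\<integral>x. g x * (h x - m)\<^sup>2 \<partial>M)"
    using g_nonneg by (intro integral_nonneg_AE) (auto elim!: eventually_mono)
  also have "\<dots> = (\<integral>x. g x * (h x)\<^sup>2 - 2 * m * (g x * h x) + m\<^sup>2 * g x \<partial>M)"
    by (rule Bochner_Integration.integral_cong) (simp_all add: power2_eq_square algebra_simps)
  also have "\<dots> = (\<integral>x. g x * (h x)\<^sup>2 \<partial>M) - m\<^sup>2"
    using g_int gh_int gh2_int g_total by (simp add: m_def power2_eq_square)
  finally show ?thesis
    by (simp add: m_def)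
qed

lemma Re_fourier_coeff:
  fixes f :: "real \<Rightarrow> real"
  assumes "integrable lborel (\<lambda>x. indicator {0..1} x * f x)"
  shows "Re (fourier_coeff f j) = (\<integral>x. indicator {0..1} x * f x * cos (2 * pi * j * x) \<partial>lborel)"
proof -
  define g where "g = (\<lambda>x. indicator {0..1} x * f x)"
  define e where "e = (\<lambda>x::real. exp (- 2 * pi * \<i> * of_int j * of_real x))"
  have e_cis: "e x = cis (- 2 * pi * j * x)" for x
    by (simp add: e_def cis_conv_exp mult_ac)
  have coeff_eq: "fourier_coeff f j = (\<integral>x. complex_of_real (g x) * e x \<partial>lborel)"
    unfolding fourier_coeff_def set_lebesgue_integral_def g_def e_def
    by (intro Bochner_Integration.integral_cong) (auto simp: indicator_def)
  have "integrable lborel (\<lambda>x. complex_of_real (g x) * e x)"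
  proof (rule Bochner_Integration.integrable_bound)
    show "integrable lborel g"
      using assms by (simp add: g_def)
    then show "(\<lambda>x. complex_of_real (g x) * e x) \<in> borel_measurable lborel"
      unfolding e_def by measurable
  qed (simp add: norm_mult e_cis)
  then have "Re (fourier_coeff f j) = (\<integral>x. Re (complex_of_real (g x) * e x) \<partial>lborel)"
    unfolding coeff_eq by (rule integral_Re[symmetric])
  then show ?thesis
    by (simp add: g_def e_cis)
qed

lemma cos_2pi_nonneg_near_int:
  fixes x :: real
  assumes "\<bar>x - of_int (round x)\<bar> \<le> 1/4"
  shows "0 \<le> cos (2 * pi * x)"
proof -
  define t where "t = x - of_int (round x)"
  have "cos (2 * pi * x) = cos (2 * pi * t + 2 * pi * of_int (round x))"
    by (simp add: t_def algebra_simps)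
  also have "\<dots> = cos (2 * pi * t)"
    by (simp add: cos_add)
  finally have periodic: "cos (2 * pi * x) = cos (2 * pi * t)" .
  have "\<bar>2 * pi * t\<bar> \<le> pi / 2"
    using assms pi_gt_zero by (simp add: t_def abs_mult)
  then show ?thesis
    unfolding periodic by (intro cos_ge_zero) linarith+
qed

lemma supported_quarter_cos_square_le:
  fixes f :: "real \<Rightarrow> real"
  assumes "supported_quarter f" and "AE x in lborel. 0 \<le> f x"
  shows "AE x in lborel. f x * (cos (2 * pi * x))\<^sup>2 \<le> f x * cos (2 * pi * x)"
  using assms unfolding supported_quarter_def
proof eventually_elim
  case (elim x)
  then show ?case
    using cos_2pi_nonneg_near_int[of x]
    by (cases "\<bar>x - of_int (round x)\<bar> > 1/4")
       (auto simp: power2_eq_square intro!: mult_left_mono mult_left_le)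
qed

lemma circle_pdf_restricted_density:
  assumes "circle_pdf f"
  shows "integrable lborel (\<lambda>x. indicator {0..1} x * f x)"
    and "AE x in lborel. 0 \<le> indicator {0..1} x * f x"
    and "(\<integral>x. indicator {0..1} x * f x \<partial>lborel) = 1"
proof -
  show total: "(\<integral>x. indicator {0..1} x * f x \<partial>lborel) = 1"
    using assms by (simp add: circle_pdf_def set_lebesgue_integral_def)
  text \<open>A nonzero Bochner integral forces integrability.\<close>
  show "integrable lborel (\<lambda>x. indicator {0..1} x * f x)"
    using not_integrable_integral_eq total by fastforce
  show "AE x in lborel. 0 \<le> indicator {0..1} x * f x"
    using assms by (auto simp: circle_pdf_def indicator_def elim!: eventually_mono)
qed

theorem lemma2p17:
  fixes f :: "real \<Rightarrow> real"
  assumes "circle_pdf f" and "supported_quarter f"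
  shows "2 * (Re (fourier_coeff f 1))\<^sup>2 - 1 \<le> Re (fourier_coeff f 2) \<and>
         Re (fourier_coeff f 2) \<le> 2 * Re (fourier_coeff f 1) - 1"
proof -
  define g where "g x = indicator {0..1} x * f x" for x :: real
  define c where "c x = cos (2 * pi * x)" for x :: real
  note density = circle_pdf_restricted_density[OF assms(1), folded g_def]
  note Re_coeff = Re_fourier_coeff[OF circle_pdf_restricted_density(1)[OF assms(1)], folded g_def]
  have gc_int: "integrable lborel (\<lambda>x. g x * c x)"
    using density(1) by (rule integrable_mult_bounded[where B = 1]) (auto simp: c_def)
  have gc2_int: "integrable lborel (\<lambda>x. g x * (c x)\<^sup>2)"
    using density(1) by (rule integrable_mult_bounded[where B = 1]) (auto simp: c_def abs_square_le_1)
  have Re1: "Re (fourier_coeff f 1) = (\<integral>x. g x * c x \<partial>lborel)"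
    using Re_coeff[of 1] by (simp add: c_def)
  have cos_4pi: "cos (2 * pi * real_of_int 2 * x) = 2 * (c x)\<^sup>2 - 1" for x
    using cos_double_cos[of "2 * pi * x"] by (simp add: c_def mult_ac)
  have "Re (fourier_coeff f 2) = (\<integral>x. 2 * (g x * (c x)\<^sup>2) - g x \<partial>lborel)"
    unfolding Re_coeff cos_4pi by (simp add: algebra_simps)
  then have Re2: "Re (fourier_coeff f 2) = 2 * (\<integral>x. g x * (c x)\<^sup>2 \<partial>lborel) - 1"
    using density gc2_int by simp
  have "AE x in lborel. f x * (c x)\<^sup>2 \<le> f x * c x"
    using supported_quarter_cos_square_le assms by (simp add: c_def circle_pdf_def)
  then have "AE x in lborel. g x * (c x)\<^sup>2 \<le> g x * c x"
    by eventually_elim (simp add: g_def mult.assoc mult_left_mono)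
  then have upper: "(\<integral>x. g x * (c x)\<^sup>2 \<partial>lborel) \<le> (\<integral>x. g x * c x \<partial>lborel)"
    using gc_int gc2_int by (intro integral_mono_AE)
  have lower: "(\<integral>x. g x * c x \<partial>lborel)\<^sup>2 \<le> (\<integral>x. g x * (c x)\<^sup>2 \<partial>lborel)"
    using density gc_int gc2_int by (rule weighted_mean_square_le)
  show ?thesis
    unfolding Re1 Re2 using lower upper by simp
qed

end
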